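(* Let $\{X_t,Z_t\}$ be a mean-zero jointly stationary bivariate time series with residual spectral density $f=f_{X|Z}=f_X-f_{XZ}f_{ZX}/f_Z$, and let $\tilde f=f/\langle f\rangle_\pi$ and $F(\lambda)=\int_0^\lambda\tilde f(\omega)d\omega$. Let $R\in\mathcal{R}_L$ with Lipschitz constant $L_R$, and let $\delta>0$ be such that $$S:=\sup_{0\le\lambda\le\pi}|\pi\tilde f(\lambda)-1|>\frac{\sqrt\delta}{L_R\pi}.$$ For $\Delta>0$ let $h(\lambda)=A(\tilde f(\lambda)+\Delta)$ with $A=\langle f\rangle_\pi/(1+\pi\Delta)$, $H(\lambda)=\int_0^\lambda\tilde h(t)dt$ where $\tilde h=h/\langle h\rangle_\pi$, and let the released data be based on the privacy mechanism $\Psi_h(e^{-i\lambda})=\exp\{i\pi\tilde R(H(\lambda))\}$, where $\tilde R(x)=\mathrm{sgn}(x)R(|x|)$. Then $\Psi_h$ is $\delta$-LIP if $\Delta\in(0,B]$, where $$B=\sqrt\delta\,\big(L_R\pi^2S-\pi\sqrt\delta\big)^{-1}.$$ Moreover, if $R$ has a derivative $r$ with $r(x)>0$ for all $x\in(0,1)$, and $f(\lambda)>0$ for $0\le\lambda\le\pi$, then for every $0<\lambda<\pi$, $$|\Psi_h(e^{-i\lambda})-\Psi_f(e^{-i\lambda})|\ge\frac{\alpha\pi}{2}Q(\lambda)\,|F(\lambda)-\lambda/\pi|,$$ where $\Psi_f(e^{-i\lambda})=\exp\{i\pi\tilde R(F(\lambda))\}$, $\alpha=\Delta\pi/(1+\Delta\pi)$,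 $Q(\lambda)=\min_{x\in L(\lambda)}r(x)$, and $L(\lambda)$ is the closed line segment joining $F(\lambda)$ and $(1-\alpha)F(\lambda)+\alpha\lambda/\pi$.
   Context: Spectral densities are even functions on $[-\pi,\pi]$. Notation: $\langle u,f\rangle=(2\pi)^{-1}\int_{-\pi}^{\pi}u(\lambda)f(\lambda)d\lambda$, $\langle f\rangle=\langle1,f\rangle$, $\langle f\rangle_\pi=\pi^{-1}\int_0^\pi f(\lambda)d\lambda$. Classes: $\mathcal{R}=\{R:[0,1]\to[0,1]:R(0)=0,\ R(x)+R(1-x)=1\ \forall x\}$ and $\mathcal{R}_L=\{R\in\mathcal{R}:|R(x)-R(y)|\le L_R|x-y|\ \forall x,y\in[0,1]\}$, $L_R>0$. For a linear filter $\Psi$ (evaluated at $e^{-i\lambda}$, with $\overline{\Psi(e^{-i\lambda})}=\Psi(e^{i\lambda})$), the Linear Incremental Privacy is $\mathrm{LIP}(\Psi,f)=1-\langle\Psi,f\rangle^2/(\langle\Psi\overline\Psi,f\rangle\langle f\rangle)$, which for an all-pass filter ($|\Psi(e^{-i\lambda})|=1$) equals $1-\langle\Psi,f\rangle^2/\langle f\rangle^2$. $\Psi$ is $\delta$-LIP for $f$ if $\mathrm{LIP}(\Psi,f)\ge1-\delta$. *)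

theory Defs
  imports "HOL-Analysis.Analysis"
begin

text \<open>Spectral densities and filters are functions of the frequency lambda in [-pi,pi];
  a filter Psi is represented by lambda |-> Psi(e^{-i lambda}).\<close>

definition ip :: "(real \<Rightarrow> complex) \<Rightarrow> (real \<Rightarrow> real) \<Rightarrow> complex" where
  "ip u f = integral {-pi..pi} (\<lambda>x. u x * complex_of_real (f x)) / complex_of_real (2 * pi)"

definition avg_pi :: "(real \<Rightarrow> real) \<Rightarrow> real" where
  "avg_pi f = integral {0..pi} f / pi"

definition dint :: "real \<Rightarrow> real \<Rightarrow> (real \<Rightarrow> real) \<Rightarrow> real" where
  "dint a b g = (if a \<le> b then integral {a..b} g else - integral {b..a} g)"

definition tilde :: "(real \<Rightarrow> real) \<Rightarrow> real \<Rightarrow> real" where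
  "tilde f x = f x / (pi * avg_pi f)"

definition cdf :: "(real \<Rightarrow> real) \<Rightarrow> real \<Rightarrow> real" where
  "cdf f lam = dint 0 lam (tilde f)"

definition Rt :: "(real \<Rightarrow> real) \<Rightarrow> real \<Rightarrow> real" where
  "Rt R x = sgn x * R \<bar>x\<bar>"

definition mech :: "(real \<Rightarrow> real) \<Rightarrow> (real \<Rightarrow> real) \<Rightarrow> real \<Rightarrow> complex" where
  "mech R g lam = exp (\<i> * complex_of_real (pi * Rt R (cdf g lam)))"

definition LIP :: "(real \<Rightarrow> complex) \<Rightarrow> (real \<Rightarrow> real) \<Rightarrow> complex" where
  "LIP Psi f = 1 - (ip Psi f)\<^sup>2 / (ip (\<lambda>x. Psi x * cnj (Psi x)) f * ip (\<lambda>_. 1) f)"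

definition delta_LIP :: "real \<Rightarrow> (real \<Rightarrow> complex) \<Rightarrow> (real \<Rightarrow> real) \<Rightarrow> bool" where
  "delta_LIP \<delta> Psi f \<longleftrightarrow> LIP Psi f \<in> \<real> \<and> 1 - \<delta> \<le> Re (LIP Psi f)"

definition in_RL :: "(real \<Rightarrow> real) \<Rightarrow> real \<Rightarrow> bool" where
  "in_RL R L \<longleftrightarrow> (\<forall>x\<in>{0..1}. R x \<in> {0..1}) \<and> R 0 = 0 \<and>
     (\<forall>x\<in>{0..1}. R x + R (1 - x) = 1) \<and> L > 0 \<and>
     (\<forall>x\<in>{0..1}. \<forall>y\<in>{0..1}. \<bar>R x - R y\<bar> \<le> L * \<bar>x - y\<bar>)"

definition sup_S :: "(real \<Rightarrow> real) \<Rightarrow> real" where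
  "sup_S f = (SUP x\<in>{0..pi}. \<bar>pi * tilde f x - 1\<bar>)"

definition hfun :: "(real \<Rightarrow> real) \<Rightarrow> real \<Rightarrow> real \<Rightarrow> real" where
  "hfun f \<Delta> x = avg_pi f / (1 + pi * \<Delta>) * (tilde f x + \<Delta>)"

end

theory Submission
  imports Defs
begin

(* Since Psi_h is all-pass and Psi_h(-lambda) is the conjugate of Psi_h(lambda),
   LIP(Psi_h, f) = 1 - K^2 with K = int_0^pi cos(pi R(H lambda)) ftilde(lambda) dlambda.  Writing
   ftilde = htilde + Delta/(1 + pi Delta) (pi ftilde - 1), the htilde-part of K vanishes: the
   substitution u = H(lambda) turns it into int_0^1 cos(pi R u) du, which is zero by the symmetry
   R(1 - u) = 1 - R(u).  The remaining part is at most Delta pi S / (1 + pi Delta) <= sqrt delta.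
   For the second claim, H = (1 - alpha) F + alpha lambda/pi, so the mean value theorem bounds
   |R(H) - R(F)| from below by Q |H - F|, and |e^(i a) - e^(i b)| >= |a - b|/2 for |a - b| <= pi. *)

lemma integrable_continuous_mult_nonneg:
  fixes c g :: "real \<Rightarrow> real"
  assumes "continuous_on {a..b} c" "g integrable_on {a..b}" "\<And>x. x \<in> {a..b} \<Longrightarrow> g x \<ge> 0"
  shows "(\<lambda>x. c x * g x) integrable_on {a..b}"
proof -
  have "g absolutely_integrable_on {a..b}"
    using assms by (intro nonnegative_absolutely_integrable_1) auto
  moreover have "c \<in> borel_measurable (lebesgue_on {a..b})"
    using assms(1) by (intro continuous_imp_measurable_on_sets_lebesgue) auto
  moreover have "bounded (c ` {a..b})"
    using assms(1) by (intro compact_imp_bounded compact_continuous_image) auto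
  ultimately have "(\<lambda>x. c x * g x) absolutely_integrable_on {a..b}"
    by (intro absolutely_integrable_bounded_measurable_product_real) auto
  then show ?thesis
    using set_lebesgue_integral_eq_integral(1) by blast
qed

lemma additive_interval_fun_eq_0:
  fixes D :: "real \<Rightarrow> real \<Rightarrow> real" and W :: "real \<Rightarrow> real"
  assumes "a \<le> b"
    and additive: "\<And>s m t. a \<le> s \<Longrightarrow> s \<le> m \<Longrightarrow> m \<le> t \<Longrightarrow> t \<le> b \<Longrightarrow> D s t = D s m + D m t"
    and small: "\<And>e x. e > 0 \<Longrightarrow> x \<in> {a..b} \<Longrightarrow> \<exists>d>0. \<forall>s t.
                  a \<le> s \<and> s \<le> x \<and> x \<le> t \<and> t \<le> b \<and> t - s < d \<longrightarrow> \<bar>D s t\<bar> \<le> e * (W t - W s)"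
  shows "D a b = 0"
proof -
  have bound: "\<bar>D a b\<bar> \<le> e * (W b - W a)" if "e > 0" for e
  proof -
    define P where "P s t \<longleftrightarrow> (a \<le> s \<longrightarrow> t \<le> b \<longrightarrow> \<bar>D s t\<bar> \<le> e * (W t - W s))" for s t
    have "P a b"
      using \<open>a \<le> b\<close>
    proof (induct rule: Bolzano)
      case (trans s m t)
      then show ?case
        unfolding P_def using additive[of s m t] by (auto simp: algebra_simps)
    next
      case (local x)
      then obtain d where "d > 0" and "\<forall>s t. a \<le> s \<and> s \<le> x \<and> x \<le> t \<and> t \<le> b \<and> t - s < d
          \<longrightarrow> \<bar>D s t\<bar> \<le> e * (W t - W s)"
        using small[OF \<open>e > 0\<close>, of x] by auto
      then show ?case
        unfolding P_def by blast
    qed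
    then show ?thesis
      unfolding P_def by simp
  qed
  have "\<bar>D a b\<bar> \<le> 0 + e" if "e > 0" for e
  proof -
    have "\<bar>D a b\<bar> \<le> e / (\<bar>W b - W a\<bar> + 1) * (W b - W a)"
      by (rule bound) (use that in simp)
    also have "\<dots> \<le> e / (\<bar>W b - W a\<bar> + 1) * (\<bar>W b - W a\<bar> + 1)"
      using that by (intro mult_left_mono) auto
    also have "\<dots> = e"
      by simp
    finally show ?thesis by simp
  qed
  then show ?thesis
    using field_le_epsilon[of "\<bar>D a b\<bar>" 0] by simp
qed

lemma integral_mult_near_constant:
  fixes g w :: "real \<Rightarrow> real"
  assumes gw: "(\<lambda>x. g x * w x) integrable_on {s..t}" and w: "w integrable_on {s..t}"
    and w_nonneg: "\<And>x. x \<in> {s..t} \<Longrightarrow> w x \<ge> 0"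
    and near: "\<And>x. x \<in> {s..t} \<Longrightarrow> \<bar>g x - c\<bar> \<le> e"
  shows "\<bar>integral {s..t} (\<lambda>x. g x * w x) - c * integral {s..t} w\<bar> \<le> e * integral {s..t} w"
proof -
  have "integral {s..t} (\<lambda>x. g x * w x) - c * integral {s..t} w
      = integral {s..t} (\<lambda>x. (g x - c) * w x)"
    using integral_diff[OF gw integrable_on_mult_right[OF w, of c]]
    by (simp add: left_diff_distrib)
  also have "\<bar>\<dots>\<bar> \<le> integral {s..t} (\<lambda>x. e * w x)"
  proof -
    have "norm (integral {s..t} (\<lambda>x. (g x - c) * w x)) \<le> integral {s..t} (\<lambda>x. e * w x)"
    proof (rule integral_norm_bound_integral)
      show "(\<lambda>x. (g x - c) * w x) integrable_on {s..t}"
        using gw w by (simp add: left_diff_distrib integrable_diff integrable_on_mult_right)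
      show "(\<lambda>x. e * w x) integrable_on {s..t}"
        using w by (rule integrable_on_mult_right)
      show "norm ((g x - c) * w x) \<le> e * w x" if "x \<in> {s..t}" for x
        using near[OF that] w_nonneg[OF that] by (simp add: abs_mult mult_right_mono)
    qed
    then show ?thesis
      by simp
  qed
  finally show ?thesis
    by simp
qed

lemma abs_integral_substitution_error_le:
  fixes \<phi> W w :: "real \<Rightarrow> real"
  assumes "s \<le> t" and \<phi>W_w: "(\<lambda>y. \<phi> (W y) * w y) integrable_on {s..t}"
    and w: "w integrable_on {s..t}" and w_nonneg: "\<And>y. y \<in> {s..t} \<Longrightarrow> w y \<ge> 0"
    and \<phi>: "\<phi> integrable_on {W s..W t}"
    and W: "integral {s..t} w = W t - W s" and W_cont: "continuous_on {s..t} W"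
    and near: "\<And>y. y \<in> {s..t} \<Longrightarrow> \<bar>\<phi> (W y) - c\<bar> \<le> e"
  shows "\<bar>integral {s..t} (\<lambda>y. \<phi> (W y) * w y) - integral {W s..W t} \<phi>\<bar> \<le> 2 * e * (W t - W s)"
proof -
  have "W s \<le> W t"
    using integral_nonneg[OF w w_nonneg] W by simp
  have "\<bar>integral {s..t} (\<lambda>y. \<phi> (W y) * w y) - c * (W t - W s)\<bar> \<le> e * (W t - W s)"
    using integral_mult_near_constant[OF \<phi>W_w w w_nonneg near] W by simp
  moreover have "\<bar>integral {W s..W t} (\<lambda>u. \<phi> u * 1) - c * integral {W s..W t} (\<lambda>_. 1)\<bar>
      \<le> e * integral {W s..W t} (\<lambda>_. 1)"
  proof (rule integral_mult_near_constant)
    fix u assume "u \<in> {W s..W t}"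
    then obtain y where "y \<in> {s..t}" "W y = u"
      using IVT'[of W s u t] \<open>s \<le> t\<close> W_cont by auto
    then show "\<bar>\<phi> u - c\<bar> \<le> e"
      using near by blast
  qed (use \<phi> in auto)
  ultimately show ?thesis
    using abs_triangle_ineq4[of "integral {s..t} (\<lambda>y. \<phi> (W y) * w y) - c * (W t - W s)"
        "integral {W s..W t} \<phi> - c * (W t - W s)"] \<open>W s \<le> W t\<close>
    by simp
qed

lemma indefinite_integral_diff:
  fixes w :: "real \<Rightarrow> 'a::banach"
  assumes "w integrable_on {a..b}" "a \<le> s" "s \<le> t" "t \<le> b"
  shows "integral {s..t} w = integral {a..t} w - integral {a..s} w"
  using Henstock_Kurzweil_Integration.integral_combine[OF assms(2,3)] assms
    integrable_on_subinterval[OF assms(1), of a t]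
  by (simp add: algebra_simps)

(* W x = integral {a..x} w need not be differentiable, so there is no chain rule.  Instead, the
   difference D s t of the two sides over [s, t] is additive in the interval and, on short
   intervals around each x, at most e (W t - W s), as both sides are close to phi (W x) (W t - W s). *)
lemma integral_substitution_indefinite_integral:
  fixes w \<phi> :: "real \<Rightarrow> real"
  assumes "a \<le> b" and w: "w integrable_on {a..b}"
    and w_nonneg: "\<And>x. x \<in> {a..b} \<Longrightarrow> w x \<ge> 0"
    and \<phi>: "continuous_on {0..integral {a..b} w} \<phi>"
  shows "integral {a..b} (\<lambda>x. \<phi> (integral {a..x} w) * w x) = integral {0..integral {a..b} w} \<phi>"
proof -
  define W where "W x = integral {a..x} w" for x
  have w_sub: "w integrable_on {s..t}" if "a \<le> s" "t \<le> b" for s t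
    using integrable_on_subinterval[OF w] that by auto
  have W_diff: "integral {s..t} w = W t - W s" if "a \<le> s" "s \<le> t" "t \<le> b" for s t
    unfolding W_def using indefinite_integral_diff[OF w that] .
  have W_mono: "W s \<le> W t" if "a \<le> s" "s \<le> t" "t \<le> b" for s t
    using integral_nonneg[OF w_sub[of s t]] W_diff[OF that] w_nonneg that by force
  have W_range: "W x \<in> {0..W b}" if "x \<in> {a..b}" for x
    using W_mono[of a x] W_mono[of x b] that by (simp add: W_def)
  have W_cont: "continuous_on {a..b} W"
    unfolding W_def using w by (rule indefinite_integral_continuous_1)
  have \<phi>': "continuous_on {0..W b} \<phi>"
    using \<phi> by (simp add: W_def)
  have \<phi>W_cont: "continuous_on {a..b} (\<lambda>x. \<phi> (W x))"
    using continuous_on_compose2[OF \<phi>' W_cont] W_range by blast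
  have \<phi>W_w_sub: "(\<lambda>x. \<phi> (W x) * w x) integrable_on {s..t}" if "a \<le> s" "t \<le> b" for s t
    using integrable_continuous_mult_nonneg[OF \<phi>W_cont w w_nonneg] integrable_on_subinterval that
    by fastforce
  have \<phi>_sub: "\<phi> integrable_on {u..v}" if "0 \<le> u" "v \<le> W b" for u v
    using \<phi>' that by (intro integrable_continuous_real) (auto intro: continuous_on_subset)
  define D where "D s t = integral {s..t} (\<lambda>x. \<phi> (W x) * w x) - integral {W s..W t} \<phi>" for s t
  have "D a b = 0"
  proof (rule additive_interval_fun_eq_0[OF \<open>a \<le> b\<close>])
    fix s m t assume "a \<le> s" "s \<le> m" "m \<le> t" "t \<le> b"
    then show "D s t = D s m + D m t"
      using Henstock_Kurzweil_Integration.integral_combine[OF \<open>s \<le> m\<close> \<open>m \<le> t\<close> \<phi>W_w_sub[of s t]]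
        Henstock_Kurzweil_Integration.integral_combine
          [OF W_mono[of s m] W_mono[of m t] \<phi>_sub[of "W s" "W t"]]
        W_range[of s] W_range[of t]
      unfolding D_def by auto
  next
    fix e x :: real assume "e > 0" "x \<in> {a..b}"
    then obtain d where "d > 0"
      and d: "\<And>y. y \<in> {a..b} \<Longrightarrow> \<bar>y - x\<bar> < d \<Longrightarrow> \<bar>\<phi> (W y) - \<phi> (W x)\<bar> < e / 2"
      using \<phi>W_cont unfolding continuous_on_iff dist_real_def by (meson half_gt_zero)
    have "\<bar>D s t\<bar> \<le> 2 * (e / 2) * (W t - W s)"
      if st: "a \<le> s" "s \<le> x" "x \<le> t" "t \<le> b" "t - s < d" for s t
      unfolding D_def
    proof (rule abs_integral_substitution_error_le)
      fix y assume "y \<in> {s..t}"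
      then have "y \<in> {a..b}" "\<bar>y - x\<bar> < d"
        using st by auto
      then show "\<bar>\<phi> (W y) - \<phi> (W x)\<bar> \<le> e / 2"
        using d by fastforce
    qed (use st w_sub \<phi>W_w_sub w_nonneg \<phi>_sub W_range W_diff W_cont in
         \<open>auto intro: continuous_on_subset\<close>)
    with \<open>d > 0\<close> show "\<exists>d>0. \<forall>s t. a \<le> s \<and> s \<le> x \<and> x \<le> t \<and> t \<le> b \<and> t - s < d
        \<longrightarrow> \<bar>D s t\<bar> \<le> e * (W t - W s)"
      by auto
  qed
  then show ?thesis
    by (simp add: D_def W_def)
qed

lemma in_RL_symmetric: "in_RL R L \<Longrightarrow> x \<in> {0..1} \<Longrightarrow> R (1 - x) = 1 - R x"
  unfolding in_RL_def by (metis add_diff_cancel_left')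

lemma in_RL_one: "in_RL R L \<Longrightarrow> R 1 = 1"
  using in_RL_symmetric[of R L 0] by (simp add: in_RL_def)

lemma in_RL_Lipschitz_const_ge_1:
  assumes "in_RL R L"
  shows "L \<ge> 1"
proof -
  have "\<bar>R 1 - R 0\<bar> \<le> L * \<bar>1 - 0\<bar>"
    using assms unfolding in_RL_def by (meson atLeastAtMost_iff order_refl zero_le_one)
  then show ?thesis
    using assms in_RL_one[OF assms] by (simp add: in_RL_def)
qed

lemma in_RL_continuous_on: "in_RL R L \<Longrightarrow> continuous_on {0..1} R"
  unfolding in_RL_def
  by (intro lipschitz_on_continuous_on[of L] lipschitz_onI) (auto simp: dist_real_def)

lemma integral_cos_pi_RL_eq_0:
  assumes "in_RL R L"
  shows "integral {0..1} (\<lambda>u. cos (pi * R u)) = 0"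
proof -
  define \<phi> where "\<phi> u = cos (pi * R u)" for u
  have "integral {0..1} \<phi> = integral {-1..-0} (\<lambda>x. \<phi> (-x))"
    by (rule Henstock_Kurzweil_Integration.integral_reflect_real[symmetric])
  also have "\<dots> = integral {0..1} (\<lambda>u. \<phi> (1 - u))"
    using integral_shift_Icc_real[of 0 1 "\<lambda>x. \<phi> (-x)" "-1"] by (simp add: comp_def)
  also have "\<dots> = integral {0..1} (\<lambda>u. - \<phi> u)"
    using in_RL_symmetric[OF assms] by (intro integral_cong) (simp add: \<phi>_def right_diff_distrib)
  finally show ?thesis
    unfolding \<phi>_def by simp
qed

lemma abs_sin_ge_half_abs:
  fixes y :: real
  assumes "\<bar>y\<bar> \<le> pi / 2"
  shows "\<bar>y\<bar> / 2 \<le> \<bar>sin y\<bar>"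
proof -
  have "\<bar>sin y - (\<Sum>m<3. sin_coeff m * y ^ m)\<bar> \<le> inverse (fact 3) * \<bar>y\<bar> ^ 3"
    by (rule Maclaurin_sin_bound)
  then have taylor: "\<bar>sin y - y\<bar> \<le> \<bar>y\<bar> ^ 3 / 6"
    by (simp add: numeral_3_eq_3 sin_coeff_Suc cos_coeff_def field_simps)
  have "\<bar>y\<bar> \<le> 1.6"
    using assms pi_approx by simp
  then have "\<bar>y\<bar> * \<bar>y\<bar> \<le> 3"
    using mult_mono[of "\<bar>y\<bar>" "1.6" "\<bar>y\<bar>" "1.6"] by simp
  then have "\<bar>y\<bar> ^ 3 / 6 \<le> \<bar>y\<bar> / 2"
    using mult_left_mono[of "\<bar>y\<bar> * \<bar>y\<bar>" 3 "\<bar>y\<bar>"] by (simp add: power3_eq_cube)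
  with taylor show ?thesis
    by linarith
qed

lemma norm_exp_i_diff_ge:
  fixes a b :: real
  assumes "\<bar>a - b\<bar> \<le> pi"
  shows "\<bar>a - b\<bar> / 2 \<le> cmod (exp (\<i> * of_real a) - exp (\<i> * of_real b))"
proof -
  have "exp (\<i> * of_real a) - exp (\<i> * of_real b)
      = exp (\<i> * of_real b) * (exp (\<i> * of_real (a - b)) - 1)"
    by (simp add: algebra_simps flip: exp_add)
  then have "cmod (exp (\<i> * of_real a) - exp (\<i> * of_real b)) = 2 * \<bar>sin ((a - b) / 2)\<bar>"
    by (simp add: norm_mult dist_exp_i_1 del: of_real_diff)
  moreover have "\<bar>(a - b) / 2\<bar> / 2 \<le> \<bar>sin ((a - b) / 2)\<bar>"
    using assms by (intro abs_sin_ge_half_abs) simp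
  ultimately show ?thesis
    by simp
qed

lemma INF_deriv_mult_le_abs_diff:
  fixes R r :: "real \<Rightarrow> real"
  assumes deriv: "\<And>z. z \<in> closed_segment x y \<Longrightarrow>
      (R has_real_derivative r z) (at z within closed_segment x y)"
    and nonneg: "\<And>z. z \<in> open_segment x y \<Longrightarrow> r z \<ge> 0"
  shows "(INF z\<in>closed_segment x y. r z) * \<bar>y - x\<bar> \<le> \<bar>R y - R x\<bar>"
proof (cases "x = y")
  case False
  define p q where "p = min x y" and "q = max x y"
  have "p < q"
    using False by (simp add: p_def q_def)
  have seg: "closed_segment x y = {p..q}" "open_segment x y = {p<..<q}"
    by (auto simp: closed_segment_eq_real_ivl open_segment_eq_real_ivl p_def q_def)
  have cont: "continuous_on {p..q} R"
    using deriv seg by (metis DERIV_continuous continuous_on_eq_continuous_within)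
  have deriv_at: "(R has_real_derivative r z) (at z)" if "p < z" "z < q" for z
    using deriv[of z] that by (simp add: seg at_within_Icc_at)
  obtain l z where z: "p < z" "z < q" and "DERIV R z :> l" and "R q - R p = (q - p) * l"
    using MVT[OF \<open>p < q\<close> cont] deriv_at real_differentiable_def by meson
  then have "R q - R p = (q - p) * r z"
    using DERIV_unique deriv_at by blast
  moreover have "\<bar>R y - R x\<bar> = \<bar>R q - R p\<bar>" "\<bar>y - x\<bar> = q - p"
    by (cases "x \<le> y"; simp add: p_def q_def abs_minus_commute)+
  ultimately have "\<bar>R y - R x\<bar> = r z * \<bar>y - x\<bar>"
    using nonneg[of z] z seg by (simp add: abs_mult)
  moreover have "(INF z\<in>{p..q}. r z) \<le> r z"
  proof (rule cINF_lower)
    have "min 0 (min (r p) (r q)) \<le> r w" if "w \<in> {p..q}" for w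
      using nonneg[of w] that seg by (cases "w = p \<or> w = q") auto
    then show "bdd_below (r ` {p..q})"
      by (intro bdd_belowI2)
  qed (use z in auto)
  ultimately show ?thesis
    by (simp add: seg mult_right_mono)
qed simp

definition pos_density :: "(real \<Rightarrow> real) \<Rightarrow> bool" where
  "pos_density g \<longleftrightarrow> g integrable_on {0..pi} \<and> (\<forall>x\<in>{0..pi}. g x \<ge> 0) \<and> avg_pi g > 0"

lemma tilde_integrable: "g integrable_on {0..pi} \<Longrightarrow> tilde g integrable_on {0..pi}"
  unfolding tilde_def by (rule integrable_on_divide)

lemma tilde_nonneg: "pos_density g \<Longrightarrow> x \<in> {0..pi} \<Longrightarrow> tilde g x \<ge> 0"
  unfolding pos_density_def tilde_def by simp

lemma integral_tilde: "avg_pi g \<noteq> 0 \<Longrightarrow> integral {0..pi} (tilde g) = 1"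
  unfolding tilde_def avg_pi_def by simp

lemma cdf_eq_integral: "0 \<le> x \<Longrightarrow> cdf g x = integral {0..x} (tilde g)"
  by (simp add: cdf_def dint_def)

lemma cdf_mem_unit_interval:
  assumes "pos_density g" "x \<in> {0..pi}"
  shows "cdf g x \<in> {0..1}"
proof -
  have int: "tilde g integrable_on {0..pi}"
    using assms(1) tilde_integrable pos_density_def by blast
  have "integral {0..x} (tilde g) + integral {x..pi} (tilde g) = 1"
    using Henstock_Kurzweil_Integration.integral_combine[OF _ _ int, of x] assms integral_tilde
    by (simp add: pos_density_def integrable_const_ivl)
  moreover have "integral {0..x} (tilde g) \<ge> 0" "integral {x..pi} (tilde g) \<ge> 0"
    using assms tilde_nonneg by (auto intro!: integral_nonneg integrable_on_subinterval[OF int])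
  ultimately show ?thesis
    using assms(2) by (simp add: cdf_eq_integral)
qed

lemma continuous_on_cdf:
  assumes "g integrable_on {0..pi}"
  shows "continuous_on {0..pi} (cdf g)"
proof (rule continuous_on_eq)
  show "continuous_on {0..pi} (\<lambda>x. integral {0..x} (tilde g))"
    by (rule indefinite_integral_continuous_1[OF tilde_integrable[OF assms]])
qed (simp add: cdf_eq_integral)

lemma cdf_minus:
  assumes even: "\<forall>y\<in>{-pi..pi}. g (- y) = g y" and "x \<in> {0..pi}"
  shows "cdf g (- x) = - cdf g x"
proof (cases "x = 0")
  case False
  have "integral {-x..0} (tilde g) = integral {-x..0} (\<lambda>y. tilde g (- y))"
    using even assms(2) by (intro integral_cong) (auto simp: tilde_def)
  also have "\<dots> = integral {0..x} (tilde g)"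
    using Henstock_Kurzweil_Integration.integral_reflect_real[of x 0 "tilde g"] by simp
  finally show ?thesis
    using False assms(2) by (simp add: cdf_def dint_def)
qed (simp add: cdf_def dint_def)

lemma avg_pi_hfun:
  assumes "pos_density f" "\<Delta> > 0"
  shows "avg_pi (hfun f \<Delta>) = avg_pi f / pi"
proof -
  have "integral {0..pi} (hfun f \<Delta>)
      = avg_pi f / (1 + pi * \<Delta>) * integral {0..pi} (\<lambda>x. tilde f x + \<Delta>)"
    by (simp add: hfun_def[abs_def])
  also have "integral {0..pi} (\<lambda>x. tilde f x + \<Delta>) = 1 + pi * \<Delta>"
    using integral_add[OF tilde_integrable, of f "\<lambda>_. \<Delta>"] integral_tilde[of f] assms(1)
    by (simp add: pos_density_def integrable_const_ivl)
  finally show ?thesis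
    using assms(2) pi_gt_zero
    by (simp add: avg_pi_def[of "hfun f \<Delta>"] less_imp_neq[symmetric] add_pos_pos)
qed

lemma pos_density_hfun:
  assumes "pos_density f" "\<Delta> > 0"
  shows "pos_density (hfun f \<Delta>)"
  unfolding pos_density_def
proof (intro conjI ballI)
  show "hfun f \<Delta> integrable_on {0..pi}"
    using assms(1) unfolding hfun_def pos_density_def
    by (intro integrable_on_mult_right integrable_add tilde_integrable) auto
  show "hfun f \<Delta> x \<ge> 0" if "x \<in> {0..pi}" for x
    using assms tilde_nonneg[OF assms(1) that] unfolding hfun_def pos_density_def
    by (simp add: add_pos_pos)
  show "avg_pi (hfun f \<Delta>) > 0"
    using assms avg_pi_hfun by (simp add: pos_density_def)
qed

lemma tilde_hfun:
  assumes "pos_density f" "\<Delta> > 0"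
  shows "tilde (hfun f \<Delta>) x = (tilde f x + \<Delta>) / (1 + pi * \<Delta>)"
  using assms avg_pi_hfun[OF assms] by (simp add: tilde_def[of "hfun f \<Delta>"] hfun_def pos_density_def)

lemma cdf_hfun:
  assumes "pos_density f" "\<Delta> > 0" "x \<in> {0..pi}"
  shows "cdf (hfun f \<Delta>) x = (cdf f x + \<Delta> * x) / (1 + pi * \<Delta>)"
proof -
  have "tilde f integrable_on {0..x}"
    using assms(1,3) unfolding pos_density_def
    by (intro integrable_on_subinterval[OF tilde_integrable]) auto
  then have "integral {0..x} (\<lambda>y. tilde f y + \<Delta>) = cdf f x + \<Delta> * x"
    using assms(3) by (simp add: integral_add cdf_eq_integral integrable_const_ivl)
  moreover have "tilde (hfun f \<Delta>) = (\<lambda>y. (tilde f y + \<Delta>) / (1 + pi * \<Delta>))"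
    by (simp add: fun_eq_iff tilde_hfun[OF assms(1,2)])
  ultimately show ?thesis
    using assms(3) by (simp add: cdf_eq_integral)
qed

lemma Rt_nonneg: "R 0 = 0 \<Longrightarrow> 0 \<le> u \<Longrightarrow> Rt R u = R u"
  unfolding Rt_def by (cases "u = 0") auto

lemma Rt_minus: "Rt R (- u) = - Rt R u"
  unfolding Rt_def by (simp add: sgn_minus)

lemma norm_mech: "cmod (mech R g x) = 1"
  unfolding mech_def by simp

lemma mech_eq_exp_R_cdf:
  assumes "pos_density g" "in_RL R L" "x \<in> {0..pi}"
  shows "mech R g x = exp (\<i> * of_real (pi * R (cdf g x)))"
  using assms cdf_mem_unit_interval[OF assms(1,3)] by (simp add: mech_def Rt_nonneg in_RL_def)

lemma mech_minus:
  assumes "\<forall>y\<in>{-pi..pi}. g (- y) = g y" "x \<in> {0..pi}"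
  shows "mech R g (- x) = cnj (mech R g x)"
  using cdf_minus[OF assms] by (simp add: mech_def Rt_minus exp_cnj)

lemma continuous_on_R_cdf:
  assumes "pos_density g" "in_RL R L"
  shows "continuous_on {0..pi} (\<lambda>x. R (cdf g x))"
proof (rule continuous_on_compose2[OF in_RL_continuous_on[OF assms(2)]])
  show "continuous_on {0..pi} (cdf g)"
    using assms(1) by (simp add: continuous_on_cdf pos_density_def)
qed (use cdf_mem_unit_interval[OF assms(1)] in blast)

lemma ip_conj_symmetric:
  fixes \<Psi> :: "real \<Rightarrow> complex" and f :: "real \<Rightarrow> real"
  assumes f_even: "\<forall>x\<in>{-pi..pi}. f (- x) = f x"
    and \<Psi>_minus: "\<And>x. x \<in> {0..pi} \<Longrightarrow> \<Psi> (- x) = cnj (\<Psi> x)"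
    and re: "(\<lambda>x. Re (\<Psi> x) * f x) integrable_on {0..pi}"
    and im: "(\<lambda>x. Im (\<Psi> x) * f x) integrable_on {0..pi}"
  shows "ip \<Psi> f = of_real (integral {0..pi} (\<lambda>x. Re (\<Psi> x) * f x) / pi)"
proof -
  define C S where "C = integral {0..pi} (\<lambda>x. Re (\<Psi> x) * f x)"
    and "S = integral {0..pi} (\<lambda>x. Im (\<Psi> x) * f x)"
  define g where "g x = \<Psi> x * of_real (f x)" for x
  have "((\<lambda>x. of_real (Re (\<Psi> x) * f x) + \<i> * of_real (Im (\<Psi> x) * f x))
      has_integral (of_real C + \<i> * of_real S)) {0..pi}"
    unfolding C_def S_def using re im
    by (intro has_integral_add has_integral_mult_right has_integral_of_real integrable_integral)
  then have right: "(g has_integral (of_real C + \<i> * of_real S)) {0..pi}"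
    by (rule has_integral_eq[rotated]) (simp add: g_def complex_eq_iff)
  have "((\<lambda>x. of_real (Re (\<Psi> x) * f x) - \<i> * of_real (Im (\<Psi> x) * f x))
      has_integral (of_real C - \<i> * of_real S)) {0..pi}"
    unfolding C_def S_def using re im
    by (intro has_integral_diff has_integral_mult_right has_integral_of_real integrable_integral)
  then have "((\<lambda>x. g (- x)) has_integral (of_real C - \<i> * of_real S)) {0..pi}"
    by (rule has_integral_eq[rotated]) (use f_even \<Psi>_minus in \<open>simp add: g_def complex_eq_iff\<close>)
  then have left: "(g has_integral (of_real C - \<i> * of_real S)) {-pi..0}"
    using has_integral_reflect_real[where f = "\<lambda>x. g (- x)" and a = 0 and b = pi] by simp
  have "(g has_integral of_real (2 * C)) {-pi..pi}"
    using has_integral_combine[of "-pi" 0 pi g, OF _ _ left right] by (simp add: algebra_simps)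
  then show ?thesis
    unfolding ip_def g_def[symmetric] C_def by (simp add: integral_unique)
qed

lemma ip_const_1:
  assumes "\<forall>x\<in>{-pi..pi}. f (- x) = f x" "f integrable_on {0..pi}"
  shows "ip (\<lambda>_. 1) f = of_real (avg_pi f)"
  using ip_conj_symmetric[of f "\<lambda>_. 1"] assms by (simp add: avg_pi_def integrable_0)

lemma ip_mech:
  assumes f_even: "\<forall>x\<in>{-pi..pi}. f (- x) = f x" and f: "f integrable_on {0..pi}"
    and f_nonneg: "\<And>x. x \<in> {0..pi} \<Longrightarrow> f x \<ge> 0"
    and g_even: "\<forall>x\<in>{-pi..pi}. g (- x) = g x" and g: "pos_density g" and R: "in_RL R L"
  shows "ip (mech R g) f = of_real (integral {0..pi} (\<lambda>x. cos (pi * R (cdf g x)) * f x) / pi)"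
proof -
  have Re_mech: "Re (mech R g x) = cos (pi * R (cdf g x))"
    and Im_mech: "Im (mech R g x) = sin (pi * R (cdf g x))" if "x \<in> {0..pi}" for x
    using mech_eq_exp_R_cdf[OF g R that] by (simp_all add: Re_exp Im_exp)
  have "(\<lambda>x. cos (pi * R (cdf g x)) * f x) integrable_on {0..pi}"
    using continuous_on_R_cdf[OF g R]
    by (intro integrable_continuous_mult_nonneg[OF _ f f_nonneg] continuous_intros)
  then have "(\<lambda>x. Re (mech R g x) * f x) integrable_on {0..pi}"
    by (rule integrable_eq) (simp add: Re_mech)
  moreover have "(\<lambda>x. sin (pi * R (cdf g x)) * f x) integrable_on {0..pi}"
    using continuous_on_R_cdf[OF g R]
    by (intro integrable_continuous_mult_nonneg[OF _ f f_nonneg] continuous_intros)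
  then have "(\<lambda>x. Im (mech R g x) * f x) integrable_on {0..pi}"
    by (rule integrable_eq) (simp add: Im_mech)
  ultimately have "ip (mech R g) f = of_real (integral {0..pi} (\<lambda>x. Re (mech R g x) * f x) / pi)"
    using f_even mech_minus[OF g_even] by (intro ip_conj_symmetric)
  also have "integral {0..pi} (\<lambda>x. Re (mech R g x) * f x)
      = integral {0..pi} (\<lambda>x. cos (pi * R (cdf g x)) * f x)"
    by (intro integral_cong) (simp add: Re_mech)
  finally show ?thesis .
qed

lemma LIP_all_pass:
  assumes "\<And>x. cmod (\<Psi> x) = 1"
  shows "LIP \<Psi> f = 1 - (ip \<Psi> f / ip (\<lambda>_. 1) f)\<^sup>2"
proof -
  have "(\<lambda>x. \<Psi> x * cnj (\<Psi> x)) = (\<lambda>_. 1)"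
    using assms by (simp flip: complex_norm_square)
  then show ?thesis
    unfolding LIP_def by (simp add: power2_eq_square)
qed

lemma LIP_mech:
  assumes f_even: "\<forall>x\<in>{-pi..pi}. f (- x) = f x" and f: "pos_density f"
    and g_even: "\<forall>x\<in>{-pi..pi}. g (- x) = g x" and g: "pos_density g" and R: "in_RL R L"
  shows "LIP (mech R g) f
      = of_real (1 - (integral {0..pi} (\<lambda>x. cos (pi * R (cdf g x)) * tilde f x))\<^sup>2)"
proof -
  have f_int: "f integrable_on {0..pi}" and "avg_pi f > 0" and "\<And>x. x \<in> {0..pi} \<Longrightarrow> f x \<ge> 0"
    using f by (auto simp: pos_density_def)
  moreover have "integral {0..pi} (\<lambda>x. cos (pi * R (cdf g x)) * tilde f x)
      = integral {0..pi} (\<lambda>x. cos (pi * R (cdf g x)) * f x) / pi / avg_pi f"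
    by (simp add: tilde_def field_simps)
  ultimately show ?thesis
    using ip_mech[OF f_even f_int _ g_even g R] ip_const_1[OF f_even f_int]
    by (simp add: LIP_all_pass[OF norm_mech] power_divide)
qed

lemma integral_cos_pi_R_cdf_eq_0:
  assumes g: "pos_density g" and R: "in_RL R L"
  shows "integral {0..pi} (\<lambda>x. cos (pi * R (cdf g x)) * tilde g x) = 0"
proof -
  have mass: "integral {0..pi} (tilde g) = 1"
    using g integral_tilde by (simp add: pos_density_def)
  have "integral {0..pi} (\<lambda>x. cos (pi * R (cdf g x)) * tilde g x)
      = integral {0..pi} (\<lambda>x. cos (pi * R (integral {0..x} (tilde g))) * tilde g x)"
    by (intro integral_cong) (simp add: cdf_eq_integral)
  also have "\<dots> = integral {0..integral {0..pi} (tilde g)} (\<lambda>u. cos (pi * R u))"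
  proof (rule integral_substitution_indefinite_integral)
    show "tilde g integrable_on {0..pi}"
      using g tilde_integrable by (simp add: pos_density_def)
    show "continuous_on {0..integral {0..pi} (tilde g)} (\<lambda>u. cos (pi * R u))"
      unfolding mass using in_RL_continuous_on[OF R] by (intro continuous_intros)
  qed (use tilde_nonneg[OF g] in auto)
  also have "\<dots> = 0"
    unfolding mass by (rule integral_cos_pi_RL_eq_0[OF R])
  finally show ?thesis .
qed

lemma tilde_eq_tilde_hfun_plus:
  assumes "pos_density f" "\<Delta> > 0"
  shows "tilde f x = tilde (hfun f \<Delta>) x + \<Delta> / (1 + pi * \<Delta>) * (pi * tilde f x - 1)"
proof -
  have "1 + pi * \<Delta> > 0"
    using assms(2) by (simp add: add_pos_pos)
  then show ?thesis
    using tilde_hfun[OF assms] by (simp add: field_simps)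
qed

lemma abs_integral_mult_deviation_le:
  fixes c :: "real \<Rightarrow> real"
  assumes f: "pos_density f" and c: "continuous_on {0..pi} c"
    and c_le_1: "\<And>x. x \<in> {0..pi} \<Longrightarrow> \<bar>c x\<bar> \<le> 1"
    and S: "\<And>x. x \<in> {0..pi} \<Longrightarrow> \<bar>pi * tilde f x - 1\<bar> \<le> S"
  shows "(\<lambda>x. c x * (pi * tilde f x - 1)) integrable_on {0..pi}" (is ?int)
    and "\<bar>integral {0..pi} (\<lambda>x. c x * (pi * tilde f x - 1))\<bar> \<le> pi * S"
proof -
  have "(\<lambda>x. pi * (c x * tilde f x) - c x) integrable_on {0..pi}"
    using integrable_continuous_mult_nonneg[OF c tilde_integrable tilde_nonneg[OF f]]
      integrable_continuous_real[OF c] f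
    by (intro integrable_diff integrable_on_mult_right) (auto simp: pos_density_def)
  then show ?int
    by (simp add: algebra_simps)
  have "norm (integral {0..pi} (\<lambda>x. c x * (pi * tilde f x - 1))) \<le> integral {0..pi} (\<lambda>_. S)"
  proof (rule integral_norm_bound_integral[OF \<open>?int\<close> integrable_const_ivl])
    fix x assume "x \<in> {0..pi}"
    then have "\<bar>c x\<bar> * \<bar>pi * tilde f x - 1\<bar> \<le> 1 * S"
      using c_le_1 S by (intro mult_mono) auto
    then show "norm (c x * (pi * tilde f x - 1)) \<le> S"
      by (simp add: abs_mult)
  qed
  then show "\<bar>integral {0..pi} (\<lambda>x. c x * (pi * tilde f x - 1))\<bar> \<le> pi * S"
    by simp
qed

lemma abs_integral_cos_cdf_hfun_le:
  assumes f: "pos_density f" and R: "in_RL R L" and "\<Delta> > 0"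
    and S: "\<And>x. x \<in> {0..pi} \<Longrightarrow> \<bar>pi * tilde f x - 1\<bar> \<le> S"
  shows "\<bar>integral {0..pi} (\<lambda>x. cos (pi * R (cdf (hfun f \<Delta>) x)) * tilde f x)\<bar>
      \<le> \<Delta> * pi * S / (1 + pi * \<Delta>)"
proof -
  define h where "h = hfun f \<Delta>"
  define c where "c x = cos (pi * R (cdf h x))" for x
  define k where "k = \<Delta> / (1 + pi * \<Delta>)"
  have h: "pos_density h"
    unfolding h_def using f \<open>\<Delta> > 0\<close> by (rule pos_density_hfun)
  have c: "continuous_on {0..pi} c"
    unfolding c_def using continuous_on_R_cdf[OF h R] by (intro continuous_intros)
  have "\<bar>c x\<bar> \<le> 1" for x
    by (simp add: c_def)
  note dev = abs_integral_mult_deviation_le[OF f c this S]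
  have split: "c x * tilde f x = c x * tilde h x + k * (c x * (pi * tilde f x - 1))" for x
  proof -
    have "tilde f x = tilde h x + k * (pi * tilde f x - 1)"
      unfolding h_def k_def by (rule tilde_eq_tilde_hfun_plus[OF f \<open>\<Delta> > 0\<close>])
    then show ?thesis
      by (metis distrib_left mult.left_commute)
  qed
  have "(\<lambda>x. c x * tilde h x) integrable_on {0..pi}"
    using h tilde_integrable tilde_nonneg[OF h]
    by (intro integrable_continuous_mult_nonneg[OF c]) (auto simp: pos_density_def)
  then have "integral {0..pi} (\<lambda>x. c x * tilde f x)
      = integral {0..pi} (\<lambda>x. c x * tilde h x)
        + k * integral {0..pi} (\<lambda>x. c x * (pi * tilde f x - 1))"
    unfolding split using integral_add[OF _ integrable_on_mult_right[OF dev(1), of k]] by simp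
  also have "integral {0..pi} (\<lambda>x. c x * tilde h x) = 0"
    unfolding c_def by (rule integral_cos_pi_R_cdf_eq_0[OF h R])
  moreover have "k \<ge> 0"
    using \<open>\<Delta> > 0\<close> by (simp add: k_def)
  ultimately have "\<bar>integral {0..pi} (\<lambda>x. c x * tilde f x)\<bar> \<le> k * (pi * S)"
    using dev(2) by (simp add: abs_mult mult_left_mono)
  then show ?thesis
    by (simp add: c_def h_def k_def mult.assoc)
qed

lemma Delta_pi_S_div_le:
  fixes s S L \<Delta> :: real
  assumes "s > 0" "L \<ge> 1" "S > s / (L * pi)" "\<Delta> > 0" "\<Delta> \<le> s / (L * pi\<^sup>2 * S - pi * s)"
  shows "\<Delta> * pi * S / (1 + pi * \<Delta>) \<le> s"
proof -
  have "s < L * pi * S"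
    using assms(2,3) by (simp add: field_simps)
  then have "L * pi\<^sup>2 * S - pi * s > 0"
    by (simp add: power2_eq_square algebra_simps)
  then have bound: "\<Delta> * (L * pi * (pi * S) - pi * s) \<le> s"
    using assms(5) by (simp add: field_simps power2_eq_square)
  have "\<Delta> * pi * (S - s) \<le> s"
  proof (cases "S \<le> s")
    case False
    have "1 \<le> L * pi"
      using mult_mono[of 1 L 1 pi] assms(2) pi_ge_two by simp
    moreover have "0 \<le> pi * S"
      using False assms(1) by simp
    ultimately have "pi * S \<le> L * pi * (pi * S)"
      using mult_right_mono[of 1 "L * pi" "pi * S"] by simp
    then have "\<Delta> * pi * (S - s) \<le> \<Delta> * (L * pi * (pi * S) - pi * s)"
      using assms(4) by (simp add: right_diff_distrib mult_left_mono mult.assoc)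
    then show ?thesis
      using bound by linarith
  next
    case True
    then have "\<Delta> * pi * (S - s) \<le> 0"
      using assms(4) by (intro mult_nonneg_nonpos) auto
    then show ?thesis
      using assms(1) by linarith
  qed
  then show ?thesis
    using assms(4) pi_gt_zero by (simp add: divide_le_eq add_pos_pos algebra_simps)
qed

lemma hfun_even:
  assumes "\<forall>x\<in>{-pi..pi}. f (- x) = f x"
  shows "\<forall>x\<in>{-pi..pi}. hfun f \<Delta> (- x) = hfun f \<Delta> x"
  using assms by (simp add: hfun_def tilde_def)

lemma delta_LIP_mech_hfun:
  assumes f_even: "\<forall>x\<in>{-pi..pi}. f (- x) = f x" and f: "pos_density f"
    and R: "in_RL R L" and "\<delta> > 0"
    and S: "\<And>x. x \<in> {0..pi} \<Longrightarrow> \<bar>pi * tilde f x - 1\<bar> \<le> S" and S_gt: "S > sqrt \<delta> / (L * pi)"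
    and "\<Delta> > 0" and Delta_le: "\<Delta> \<le> sqrt \<delta> / (L * pi\<^sup>2 * S - pi * sqrt \<delta>)"
  shows "delta_LIP \<delta> (mech R (hfun f \<Delta>)) f"
proof -
  define K where "K = integral {0..pi} (\<lambda>x. cos (pi * R (cdf (hfun f \<Delta>) x)) * tilde f x)"
  have LIP: "LIP (mech R (hfun f \<Delta>)) f = of_real (1 - K\<^sup>2)"
    unfolding K_def using f_even f hfun_even[OF f_even] pos_density_hfun[OF f \<open>\<Delta> > 0\<close>] R
    by (rule LIP_mech)
  have "\<bar>K\<bar> \<le> \<Delta> * pi * S / (1 + pi * \<Delta>)"
    unfolding K_def using f R \<open>\<Delta> > 0\<close> S by (rule abs_integral_cos_cdf_hfun_le)
  also have "\<dots> \<le> sqrt \<delta>"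
    using \<open>\<delta> > 0\<close> in_RL_Lipschitz_const_ge_1[OF R] S_gt \<open>\<Delta> > 0\<close> Delta_le
    by (intro Delta_pi_S_div_le) auto
  finally have "K\<^sup>2 \<le> \<delta>"
    using \<open>\<delta> > 0\<close> by (metis abs_ge_zero power_mono real_sqrt_pow2 less_imp_le power2_abs)
  then show ?thesis
    unfolding delta_LIP_def LIP by simp
qed

lemma cdf_hfun_eq_convex_comb:
  assumes "pos_density f" "\<Delta> > 0" "lam \<in> {0..pi}" and \<alpha>: "\<alpha> = \<Delta> * pi / (1 + \<Delta> * pi)"
  shows "cdf (hfun f \<Delta>) lam = (1 - \<alpha>) * cdf f lam + \<alpha> * lam / pi"
proof -
  have "1 + pi * \<Delta> > 0"
    using assms(2) by (simp add: add_pos_pos)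
  then have "1 - \<alpha> = 1 / (1 + pi * \<Delta>)"
    by (simp add: \<alpha> field_simps)
  moreover have "\<alpha> * lam / pi = \<Delta> * lam / (1 + pi * \<Delta>)"
    by (simp add: \<alpha> mult.commute)
  ultimately show ?thesis
    unfolding cdf_hfun[OF assms(1-3)] by (simp add: add_divide_distrib)
qed

lemma norm_mech_diff_ge:
  assumes "pos_density g" "pos_density g'" "in_RL R L" "x \<in> {0..pi}"
  shows "pi / 2 * \<bar>R (cdf g x) - R (cdf g' x)\<bar> \<le> cmod (mech R g x - mech R g' x)"
proof -
  have "R (cdf g x) \<in> {0..1}" "R (cdf g' x) \<in> {0..1}"
    using cdf_mem_unit_interval assms by (auto simp: in_RL_def)
  then have "\<bar>R (cdf g x) - R (cdf g' x)\<bar> \<le> 1"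
    by auto
  then have "\<bar>pi * R (cdf g x) - pi * R (cdf g' x)\<bar> \<le> pi"
    using mult_left_mono[of _ 1 pi] by (simp add: abs_mult flip: right_diff_distrib)
  moreover note mech_eq_exp_R_cdf[OF assms(1,3,4)] mech_eq_exp_R_cdf[OF assms(2,3,4)]
  ultimately show ?thesis
    using norm_exp_i_diff_ge[of "pi * R (cdf g x)" "pi * R (cdf g' x)"]
    by (simp add: abs_mult flip: right_diff_distrib)
qed

lemma norm_mech_hfun_diff_ge:
  fixes r :: "real \<Rightarrow> real"
  assumes f: "pos_density f" and R: "in_RL R L" and "\<Delta> > 0"
    and deriv: "\<forall>x\<in>{0..1}. (R has_real_derivative r x) (at x within {0..1})"
    and r_pos: "\<forall>x\<in>{0<..<1}. r x > 0"
    and lam: "lam \<in> {0..pi}" and \<alpha>: "\<alpha> = \<Delta> * pi / (1 + \<Delta> * pi)"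
  shows "\<alpha> * pi / 2 * (INF x\<in>closed_segment (cdf f lam) ((1 - \<alpha>) * cdf f lam + \<alpha> * lam / pi). r x)
           * \<bar>cdf f lam - lam / pi\<bar>
         \<le> cmod (mech R (hfun f \<Delta>) lam - mech R f lam)"
proof -
  define F H where "F = cdf f lam" and "H = cdf (hfun f \<Delta>) lam"
  have H: "H = (1 - \<alpha>) * F + \<alpha> * lam / pi"
    unfolding F_def H_def using f \<open>\<Delta> > 0\<close> lam \<alpha> by (rule cdf_hfun_eq_convex_comb)
  have "F \<in> {0..1}" "H \<in> {0..1}"
    unfolding F_def H_def using cdf_mem_unit_interval lam f pos_density_hfun[OF f \<open>\<Delta> > 0\<close>] by auto
  then have seg: "closed_segment F H \<subseteq> {0..1}" "open_segment F H \<subseteq> {0<..<1}"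
    by (auto simp: closed_segment_eq_real_ivl open_segment_eq_real_ivl)
  have "(INF x\<in>closed_segment F H. r x) * \<bar>H - F\<bar> \<le> \<bar>R H - R F\<bar>"
  proof (rule INF_deriv_mult_le_abs_diff)
    show "(R has_real_derivative r z) (at z within closed_segment F H)"
      if "z \<in> closed_segment F H" for z
      using deriv seg that by (blast intro: has_field_derivative_subset)
    show "r z \<ge> 0" if "z \<in> open_segment F H" for z
      using r_pos seg that by (auto intro: less_imp_le)
  qed
  moreover have "\<bar>H - F\<bar> = \<alpha> * \<bar>F - lam / pi\<bar>"
  proof -
    have "H - F = \<alpha> * (lam / pi - F)"
      by (simp add: H algebra_simps)
    moreover have "\<alpha> \<ge> 0"
      using \<open>\<Delta> > 0\<close> by (simp add: \<alpha> add_pos_pos)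
    ultimately show ?thesis
      by (simp add: abs_mult abs_minus_commute)
  qed
  ultimately have "pi / 2 * ((INF x\<in>closed_segment F H. r x) * (\<alpha> * \<bar>F - lam / pi\<bar>))
      \<le> pi / 2 * \<bar>R H - R F\<bar>"
    by (intro mult_left_mono) auto
  also have "\<dots> \<le> cmod (mech R (hfun f \<Delta>) lam - mech R f lam)"
    unfolding F_def H_def using pos_density_hfun[OF f \<open>\<Delta> > 0\<close>] f R lam
    by (rule norm_mech_diff_ge)
  finally show ?thesis
    unfolding F_def[symmetric] H[symmetric] by (simp add: ac_simps)
qed

theorem theorem3:
  fixes f R :: "real \<Rightarrow> real" and L \<delta> \<Delta> :: real
  assumes f_even: "\<forall>x\<in>{-pi..pi}. f (- x) = f x"
    and f_nonneg: "\<forall>x\<in>{-pi..pi}. f x \<ge> 0"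
    and f_int: "f integrable_on {-pi..pi}"
    and f_mass: "avg_pi f > 0"
    and R: "in_RL R L"
    and delta: "\<delta> > 0"
    and S_bdd: "bdd_above ((\<lambda>x. \<bar>pi * tilde f x - 1\<bar>) ` {0..pi})"
    and S_gt: "sup_S f > sqrt \<delta> / (L * pi)"
    and Delta: "\<Delta> > 0"
  shows "(\<Delta> \<le> sqrt \<delta> / (L * pi\<^sup>2 * sup_S f - pi * sqrt \<delta>)
            \<longrightarrow> delta_LIP \<delta> (mech R (hfun f \<Delta>)) f)
       \<and> (\<forall>r. ((\<forall>x\<in>{0..1}. (R has_real_derivative r x) (at x within {0..1}))
               \<and> (\<forall>x\<in>{0<..<1}. r x > 0) \<and> (\<forall>x\<in>{0..pi}. f x > 0))
          \<longrightarrow> (\<forall>lam\<in>{0<..<pi}.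
                let \<alpha> = \<Delta> * pi / (1 + \<Delta> * pi);
                    Fl = cdf f lam;
                    Q = (INF x\<in>closed_segment Fl ((1 - \<alpha>) * Fl + \<alpha> * lam / pi). r x)
                in cmod (mech R (hfun f \<Delta>) lam - mech R f lam)
                     \<ge> \<alpha> * pi / 2 * Q * \<bar>Fl - lam / pi\<bar>))"
proof -
  have f: "pos_density f"
    using integrable_on_subinterval[OF f_int] f_nonneg f_mass by (auto simp: pos_density_def)
  have S: "\<bar>pi * tilde f x - 1\<bar> \<le> sup_S f" if "x \<in> {0..pi}" for x
    unfolding sup_S_def using cSUP_upper[OF that S_bdd] .
  show ?thesis
  proof (intro conjI impI allI ballI)
    assume "\<Delta> \<le> sqrt \<delta> / (L * pi\<^sup>2 * sup_S f - pi * sqrt \<delta>)"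
    then show "delta_LIP \<delta> (mech R (hfun f \<Delta>)) f"
      using delta_LIP_mech_hfun[OF f_even f R delta S S_gt Delta] by simp
  next
    fix r lam
    assume "(\<forall>x\<in>{0..1}. (R has_real_derivative r x) (at x within {0..1}))
        \<and> (\<forall>x\<in>{0<..<1}. r x > 0) \<and> (\<forall>x\<in>{0..pi}. f x > 0)"
      and "lam \<in> {0<..<pi}"
    then show "let \<alpha> = \<Delta> * pi / (1 + \<Delta> * pi);
                    Fl = cdf f lam;
                    Q = (INF x\<in>closed_segment Fl ((1 - \<alpha>) * Fl + \<alpha> * lam / pi). r x)
                in cmod (mech R (hfun f \<Delta>) lam - mech R f lam)
                     \<ge> \<alpha> * pi / 2 * Q * \<bar>Fl - lam / pi\<bar>"
      unfolding Let_def by (intro norm_mech_hfun_diff_ge[OF f R Delta _ _ _ refl]) auto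
  qed
qed

end
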